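(* Let $(a_N)$ be a sequence of positive numbers and, for each $N$, let $P_{N,a_N}$ be the probability on sequences $(n_j)_{j\ge0}$ of nonnegative integers with $\sum_jn_j=N$ given by $P_{N,a_N}((n_j))\propto e^{-a_N\sum_jjn_j}$, with $\langle n_0\rangle_{N,a_N}$ the expectation of $n_0$. Let $\lambda_N=1-m_N/N$ with integers $0\le m_N\le N$. Suppose $\lambda_N\to\lambda>0$ and $\ln N-(1-\frac{\lambda_N}2)Na_N\to\infty$. Then $P_{N,a_N}(n_0/N\ge\lambda_N)\to0$ and $\lim_{N\to\infty}\frac1N\langle n_0\rangle_{N,a_N}\le\lambda$. If $\ln N-Na_N\to\infty$, then $\frac1N\langle n_0\rangle_{N,a_N}\to0$, i.e. there is no Bose–Einstein condensation.
   Context: This is the canonical ensemble of $N$ noninteracting bosons in a one-dimensional harmonic trap, $n_j$ being the occupation of the $j$-th level and $a_N=\beta(\varepsilon_1-\varepsilon_0)$. *)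

theory Defs
  imports "HOL-Analysis.Analysis"
begin

definition configs :: "nat \<Rightarrow> (nat \<Rightarrow> nat) set" where
  "configs N = {n. finite {j. n j \<noteq> 0} \<and> (\<Sum>j\<in>{j. n j \<noteq> 0}. n j) = N}"

definition energy :: "(nat \<Rightarrow> nat) \<Rightarrow> nat" where
  "energy n = (\<Sum>j\<in>{j. n j \<noteq> 0}. j * n j)"

definition boltz :: "real \<Rightarrow> (nat \<Rightarrow> nat) \<Rightarrow> real" where
  "boltz a n = exp (- a * real (energy n))"

definition partfun :: "nat \<Rightarrow> real \<Rightarrow> real" where
  "partfun N a = infsum (boltz a) (configs N)"

definition canon_prob :: "nat \<Rightarrow> real \<Rightarrow> ((nat \<Rightarrow> nat) \<Rightarrow> bool) \<Rightarrow> real" where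
  "canon_prob N a A = infsum (boltz a) {n \<in> configs N. A n} / partfun N a"

definition mean_n0 :: "nat \<Rightarrow> real \<Rightarrow> real" where
  "mean_n0 N a = infsum (\<lambda>n. real (n 0) * boltz a n) (configs N) / partfun N a"

end

theory Submission
  imports Defs
begin

text \<open>Adding \<open>k\<close> particles to the ground level maps the configurations of \<open>M\<close> particles
  bijectively and energy-preservingly onto those of \<open>M + k\<close> particles with \<open>n\<^sub>0 \<ge> k\<close>;
  lifting every particle one level up maps the configurations of \<open>N\<close> particles onto those
  with \<open>n\<^sub>0 = 0\<close> and raises the energy by \<open>N\<close>. Hence \<open>Z N = Z (N - 1) + exp (-a N) Z N\<close>,
  i.e. \<open>Z N = (\<Prod>k\<in>{0<..N}. 1 - exp (-a k))\<inverse>\<close>, and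
  \<open>P (n\<^sub>0 \<ge> N - m) = Z m / Z N = (\<Prod>k\<in>{m<..N}. 1 - exp (-a k)) \<le> exp (-(h - m) exp (-a h))\<close>
  for \<open>h = (N + m) div 2\<close>. This exponent is \<open>(\<lambda>\<^sub>N/2 + o(1)) exp L\<^sub>N\<close> with
  \<open>L\<^sub>N = ln N - (1 - \<lambda>\<^sub>N/2) N a\<^sub>N \<rightarrow> \<infinity>\<close>. Together with
  \<open>\<langle>n\<^sub>0\<rangle> \<le> N P (n\<^sub>0 \<ge> N - m) + (N - m)\<close> this gives \<open>limsup \<langle>n\<^sub>0\<rangle>/N \<le> \<lambda>\<close>; if
  \<open>ln N - N a\<^sub>N \<rightarrow> \<infinity>\<close>, it applies with \<open>\<lambda>\<^sub>N \<rightarrow> \<epsilon>\<close> for every \<open>\<epsilon> > 0\<close>.\<close>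

lemma sum_support_superset:
  assumes "finite S" "{j. n j \<noteq> 0} \<subseteq> S" "\<And>j. f j 0 = 0"
  shows "(\<Sum>j\<in>{j. n j \<noteq> 0}. f j (n j)) = (\<Sum>j\<in>S. f j (n j))"
  by (rule sum.mono_neutral_left) (use assms in auto)

lemma configsI:
  assumes "finite S" "{j. n j \<noteq> 0} \<subseteq> S" "sum n S = N"
  shows "n \<in> configs N"
proof -
  have "finite {j. n j \<noteq> 0}" using assms(1,2) by (rule finite_subset[rotated])
  then show ?thesis
    using assms sum_support_superset[OF assms(1,2), of "\<lambda>j x. x"] unfolding configs_def by simp
qed

lemma configsD:
  assumes "n \<in> configs N" "finite S" "{j. n j \<noteq> 0} \<subseteq> S"
  shows "sum n S = N"
  using assms sum_support_superset[OF assms(2,3), of "\<lambda>j x. x"] unfolding configs_def by simp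

lemma finite_support_configs: "n \<in> configs N \<Longrightarrow> finite {j. n j \<noteq> 0}"
  unfolding configs_def by simp

lemma energy_eq_sum:
  assumes "finite S" "{j. n j \<noteq> 0} \<subseteq> S"
  shows "energy n = (\<Sum>j\<in>S. j * n j)"
  unfolding energy_def using sum_support_superset[OF assms, of "\<lambda>j x. j * x"] by simp

lemma configs_occupation_le:
  assumes "n \<in> configs N"
  shows "n j \<le> N"
proof (cases "n j = 0")
  case False
  then have "n j \<le> (\<Sum>i\<in>{j. n j \<noteq> 0}. n i)"
    using finite_support_configs[OF assms] by (intro member_le_sum) auto
  then show ?thesis using assms unfolding configs_def by simp
qed simp

lemma level_times_occupation_le_energy:
  assumes "n \<in> configs N"
  shows "j * n j \<le> energy n"
proof (cases "n j = 0")
  case False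
  then show ?thesis
    unfolding energy_def using finite_support_configs[OF assms] by (intro member_le_sum) auto
qed simp

lemma finite_configs_energy_le: "finite {n \<in> configs N. energy n \<le> B}"
proof (rule finite_subset)
  show "{n \<in> configs N. energy n \<le> B} \<subseteq>
      {f. \<forall>x. (x \<in> {0..B} \<longrightarrow> f x \<in> {0..N}) \<and> (x \<notin> {0..B} \<longrightarrow> f x = 0)}"
  proof safe
    fix n x assume n: "n \<in> configs N" "energy n \<le> B"
    show "n x \<in> {0..N}" using configs_occupation_le[OF n(1)] by simp
    assume "x \<notin> {0..B}"
    moreover have "x * n x \<le> B" using n level_times_occupation_le_energy[OF n(1), of x] by simp
    ultimately show "n x = 0" by (cases "n x") auto
  qed
qed (rule finite_set_of_finite_funs; simp)

lemma configs_0: "configs 0 = {\<lambda>_. 0}"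
proof -
  have "n = (\<lambda>_. 0)" if "n \<in> configs 0" for n
    using configs_occupation_le[OF that] by auto
  then show ?thesis unfolding configs_def by auto
qed

definition add_ground :: "nat \<Rightarrow> (nat \<Rightarrow> nat) \<Rightarrow> nat \<Rightarrow> nat" where
  "add_ground k n = n(0 := n 0 + k)"

lemma sum_add_ground:
  assumes "finite S" "0 \<in> S"
  shows "sum (add_ground k n) S = sum n S + k"
  using assms by (simp add: add_ground_def sum.remove)

lemma add_ground_in_configs:
  assumes "n \<in> configs M"
  shows "add_ground k n \<in> configs (M + k)"
proof -
  let ?S = "insert 0 {j. n j \<noteq> 0}"
  have S: "finite ?S" using finite_support_configs[OF assms] by simp
  have "sum (add_ground k n) ?S = M + k"
    using sum_add_ground[OF S insertI1] configsD[OF assms S subset_insertI] by simp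
  then show ?thesis by (rule configsI[OF S, rotated]) (auto simp: add_ground_def)
qed

lemma energy_add_ground:
  assumes "n \<in> configs M"
  shows "energy (add_ground k n) = energy n"
proof -
  let ?S = "insert 0 {j. n j \<noteq> 0}"
  have "finite ?S" using finite_support_configs[OF assms] by simp
  then show ?thesis
    by (subst (1 2) energy_eq_sum[of ?S]) (auto simp: add_ground_def intro: sum.cong)
qed

lemma bij_betw_add_ground:
  "bij_betw (add_ground k) (configs M) {n \<in> configs (M + k). k \<le> n 0}"
proof (rule bij_betw_byWitness[where f' = "\<lambda>n. n(0 := n 0 - k)"])
  show "(\<lambda>n. n(0 := n 0 - k)) ` {n \<in> configs (M + k). k \<le> n 0} \<subseteq> configs M"
  proof safe
    fix n assume n: "n \<in> configs (M + k)" "k \<le> n 0"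
    let ?S = "insert 0 {j. n j \<noteq> 0}"
    have S: "finite ?S" using finite_support_configs[OF n(1)] by simp
    have "add_ground k (n(0 := n 0 - k)) = n" using n(2) by (auto simp: add_ground_def)
    then have "sum n ?S = sum (n(0 := n 0 - k)) ?S + k"
      using sum_add_ground[OF S insertI1, of k "n(0 := n 0 - k)"] by simp
    then have "sum (n(0 := n 0 - k)) ?S = M" using configsD[OF n(1) S subset_insertI] by simp
    then show "n(0 := n 0 - k) \<in> configs M" by (rule configsI[OF S, rotated]) auto
  qed
  show "add_ground k ` configs M \<subseteq> {n \<in> configs (M + k). k \<le> n 0}"
    using add_ground_in_configs by (auto simp: add_ground_def)
qed (simp_all add: add_ground_def)

definition lift_levels :: "(nat \<Rightarrow> nat) \<Rightarrow> nat \<Rightarrow> nat" where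
  "lift_levels n = case_nat 0 n"

lemma lift_levels_0 [simp]: "lift_levels n 0 = 0"
  by (simp add: lift_levels_def)

lemma support_lift_levels: "{j. lift_levels n j \<noteq> 0} = Suc ` {j. n j \<noteq> 0}"
proof (rule set_eqI)
  fix j show "j \<in> {j. lift_levels n j \<noteq> 0} \<longleftrightarrow> j \<in> Suc ` {j. n j \<noteq> 0}"
    by (cases j) (auto simp: lift_levels_def)
qed

lemma lift_levels_in_configs:
  assumes "n \<in> configs M"
  shows "lift_levels n \<in> configs M"
proof -
  have S: "finite (Suc ` {j. n j \<noteq> 0})" using finite_support_configs[OF assms] by simp
  have "sum (lift_levels n) (Suc ` {j. n j \<noteq> 0}) = M"
    using assms by (simp add: sum.reindex lift_levels_def configs_def)
  then show ?thesis by (rule configsI[OF S support_lift_levels[THEN equalityD1]])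
qed

lemma energy_lift_levels:
  assumes "n \<in> configs M"
  shows "energy (lift_levels n) = energy n + M"
proof -
  have S: "finite (Suc ` {j. n j \<noteq> 0})" using finite_support_configs[OF assms] by simp
  have "energy (lift_levels n) = (\<Sum>j\<in>{j. n j \<noteq> 0}. Suc j * n j)"
    unfolding energy_eq_sum[OF S support_lift_levels[THEN equalityD1]]
    by (simp add: sum.reindex lift_levels_def)
  also have "\<dots> = energy n + M"
    using assms by (simp add: energy_def sum.distrib configs_def)
  finally show ?thesis .
qed

lemma inj_lift_levels: "inj lift_levels"
  by (rule injI) (metis lift_levels_def nat.case(2) ext)

lemma lift_levels_image: "lift_levels ` configs M = {n \<in> configs M. n 0 = 0}"
proof safe
  fix n assume n: "n \<in> configs M" "n 0 = 0"
  define m where "m = (\<lambda>j. n (Suc j))"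
  have n_eq: "n = lift_levels m"
    using n(2) by (auto simp: lift_levels_def m_def split: nat.splits)
  have supp: "{j. n j \<noteq> 0} = Suc ` {j. m j \<noteq> 0}"
    by (subst n_eq) (rule support_lift_levels)
  have "finite {j. m j \<noteq> 0}"
    using finite_support_configs[OF n(1)] unfolding supp by (simp add: finite_image_iff)
  moreover have "sum m {j. m j \<noteq> 0} = M"
    using configsD[OF n(1) finite_support_configs[OF n(1)] order_refl] unfolding supp
    by (simp add: sum.reindex m_def)
  ultimately have "m \<in> configs M" by (intro configsI) auto
  then show "n \<in> lift_levels ` configs M" using n_eq by blast
qed (simp_all add: lift_levels_in_configs)

lemma boltz_pos: "boltz a n > 0"
  by (simp add: boltz_def)

lemma boltz_lift_levels:
  assumes "n \<in> configs M"
  shows "boltz a (lift_levels n) = exp (- a * M) * boltz a n"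
  by (simp add: boltz_def energy_lift_levels[OF assms] algebra_simps flip: exp_add)

lemma boltz_add_ground: "n \<in> configs M \<Longrightarrow> boltz a (add_ground k n) = boltz a n"
  by (simp add: boltz_def energy_add_ground)

lemma has_sum_ground_occupation_ge:
  assumes "boltz a summable_on configs M"
  shows "(boltz a has_sum partfun M a) {n \<in> configs (M + k). k \<le> n 0}"
proof -
  have "((\<lambda>n. boltz a (add_ground k n)) has_sum partfun M a) (configs M)"
    using assms unfolding partfun_def
    by (subst has_sum_cong[OF boltz_add_ground]) auto
  then show ?thesis by (simp add: has_sum_reindex_bij_betw[OF bij_betw_add_ground])
qed

text \<open>Summability over \<open>configs (Suc N)\<close> is not yet known here, so the recursion
  \<open>S \<le> Z N + exp (-a (N + 1)) S\<close> is applied to the finite energy truncations \<open>S\<close> of the sum.\<close>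
lemma sum_configs_energy_le_bound:
  assumes "a > 0" "boltz a summable_on configs N"
  shows "sum (boltz a) {n \<in> configs (Suc N). energy n \<le> B}
           \<le> partfun N a / (1 - exp (- a * Suc N))"
proof -
  define q where "q = exp (- a * Suc N)"
  define G where "G = {n \<in> configs (Suc N). energy n \<le> B}"
  define A where "A = {n \<in> configs (N + 1). 1 \<le> n 0}"
  have G: "finite G" unfolding G_def by (rule finite_configs_energy_le)
  have "sum (boltz a) (G \<inter> A) \<le> partfun N a"
    using G has_sum_ground_occupation_ge[OF assms(2), of 1]
    by (intro finite_sum_le_has_sum) (auto simp: A_def less_imp_le boltz_pos)
  moreover have "sum (boltz a) (G - A) \<le> sum (boltz a) (lift_levels ` G)"
  proof (rule sum_mono2)
    show "G - A \<subseteq> lift_levels ` G"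
    proof
      fix n assume n: "n \<in> G - A"
      then have "n \<in> lift_levels ` configs (Suc N)"
        unfolding lift_levels_image by (auto simp: A_def G_def)
      then obtain m where m: "m \<in> configs (Suc N)" "n = lift_levels m" by blast
      then show "n \<in> lift_levels ` G"
        using n energy_lift_levels[OF m(1)] by (auto simp: G_def)
    qed
  qed (use G boltz_pos less_imp_le in auto)
  moreover have "sum (boltz a) (lift_levels ` G) = q * sum (boltz a) G"
    unfolding sum.reindex[OF inj_on_subset[OF inj_lift_levels subset_UNIV]] sum_distrib_left o_def
  proof (rule sum.cong)
    fix n assume "n \<in> G"
    then show "boltz a (lift_levels n) = q * boltz a n"
      unfolding q_def by (intro boltz_lift_levels) (simp add: G_def)
  qed simp
  moreover have "sum (boltz a) G = sum (boltz a) (G \<inter> A) + sum (boltz a) (G - A)"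
    by (rule sum.Int_Diff[OF G])
  moreover have "q < 1" using assms(1) by (simp add: q_def)
  ultimately show ?thesis by (simp add: G_def q_def field_simps)
qed

lemma summable_configs:
  assumes "a > 0"
  shows "boltz a summable_on configs N"
proof (induction N)
  case 0
  then show ?case by (simp add: configs_0)
next
  case (Suc N)
  have "sum (boltz a) F \<le> partfun N a / (1 - exp (- a * Suc N))"
    if F: "finite F" "F \<subseteq> configs (Suc N)" for F
  proof -
    define B where "B = Max (energy ` F)"
    have "F \<subseteq> {n \<in> configs (Suc N). energy n \<le> B}"
      using F by (auto simp: B_def)
    then have "sum (boltz a) F \<le> sum (boltz a) {n \<in> configs (Suc N). energy n \<le> B}"
      by (intro sum_mono2 finite_configs_energy_le) (auto simp: boltz_pos less_imp_le)
    also have "\<dots> \<le> partfun N a / (1 - exp (- a * Suc N))"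
      by (rule sum_configs_energy_le_bound[OF assms Suc.IH])
    finally show ?thesis .
  qed
  then show ?case
    by (intro nonneg_bdd_above_summable_on bdd_aboveI2) (auto simp: boltz_pos less_imp_le)
qed

lemma partfun_Suc:
  assumes "a > 0"
  shows "partfun (Suc N) a = partfun N a + exp (- a * Suc N) * partfun (Suc N) a"
proof -
  define A where "A = {n \<in> configs (N + 1). 1 \<le> n 0}"
  have "configs (Suc N) = A \<union> lift_levels ` configs (Suc N)"
       "A \<inter> lift_levels ` configs (Suc N) = {}"
    unfolding lift_levels_image A_def by auto
  moreover have "(boltz a has_sum partfun N a) A"
    unfolding A_def by (rule has_sum_ground_occupation_ge[OF summable_configs[OF assms]])
  moreover have "(boltz a has_sum exp (- a * Suc N) * partfun (Suc N) a)
      (lift_levels ` configs (Suc N))"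
  proof -
    have "((\<lambda>n. exp (- a * Suc N) * boltz a n) has_sum exp (- a * Suc N) * partfun (Suc N) a)
        (configs (Suc N))"
      unfolding partfun_def by (intro has_sum_cmult_right has_sum_infsum summable_configs assms)
    then have "((boltz a \<circ> lift_levels) has_sum exp (- a * Suc N) * partfun (Suc N) a)
        (configs (Suc N))"
      by (rule has_sum_cong[THEN iffD1, rotated]) (simp add: boltz_lift_levels)
    then show ?thesis
      by (simp only: has_sum_reindex[OF inj_on_subset[OF inj_lift_levels subset_UNIV]])
  qed
  ultimately have "(boltz a has_sum partfun N a + exp (- a * Suc N) * partfun (Suc N) a)
      (configs (Suc N))"
    by (metis has_sum_Un_disjoint)
  then show ?thesis unfolding partfun_def by (rule infsumI)
qed

lemma greaterThanAtMost_Suc: "m \<le> n \<Longrightarrow> {m<..Suc n} = insert (Suc n) {m<..n}"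
  by auto

lemma partfun_eq_prod:
  assumes "a > 0"
  shows "partfun N a = 1 / (\<Prod>k\<in>{0<..N}. 1 - exp (- a * real k))"
proof (induction N)
  case 0
  then show ?case by (simp add: partfun_def configs_0 boltz_def energy_def)
next
  case (Suc N)
  define q where "q = exp (- a * Suc N)"
  have "q < 1" using assms by (simp add: q_def)
  have "partfun (Suc N) a = partfun N a / (1 - q)"
    using partfun_Suc[OF assms, of N] \<open>q < 1\<close> by (simp add: q_def field_simps)
  also have "\<dots> = 1 / ((1 - q) * (\<Prod>k\<in>{0<..N}. 1 - exp (- a * real k)))"
    by (simp add: Suc.IH)
  also have "(1 - q) * (\<Prod>k\<in>{0<..N}. 1 - exp (- a * real k))
      = (\<Prod>k\<in>{0<..Suc N}. 1 - exp (- a * real k))"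
    by (simp add: greaterThanAtMost_Suc q_def del: of_nat_Suc)
  finally show ?case .
qed

lemma partfun_pos:
  assumes "a > 0"
  shows "partfun N a > 0"
  using assms by (auto simp: partfun_eq_prod intro!: prod_pos)

lemma prod_one_minus_le_exp_neg_sum:
  fixes x :: "'a \<Rightarrow> real"
  assumes "finite A" "\<And>i. i \<in> A \<Longrightarrow> x i \<le> 1"
  shows "(\<Prod>i\<in>A. 1 - x i) \<le> exp (- (\<Sum>i\<in>A. x i))"
proof -
  have "(\<Prod>i\<in>A. 1 - x i) \<le> (\<Prod>i\<in>A. exp (- x i))"
    using assms(2) exp_ge_add_one_self[of "- x _"] by (intro prod_mono) auto
  also have "\<dots> = exp (- (\<Sum>i\<in>A. x i))"
    by (simp add: exp_sum[OF assms(1)] flip: sum_negf)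
  finally show ?thesis .
qed

lemma partfun_ratio_eq_prod:
  assumes "a > 0" "m \<le> N"
  shows "partfun m a / partfun N a = (\<Prod>k\<in>{m<..N}. 1 - exp (- a * real k))"
proof -
  have "(\<Prod>k\<in>{0<..N}. 1 - exp (- a * real k))
      = (\<Prod>k\<in>{0<..m}. 1 - exp (- a * real k)) * (\<Prod>k\<in>{m<..N}. 1 - exp (- a * real k))"
    using assms(2) by (subst prod.union_disjoint[symmetric]) (auto simp: ivl_disj_un_two(6))
  moreover have "(\<Prod>k\<in>{0<..m}. 1 - exp (- a * real k)) > 0"
    using assms(1) by (intro prod_pos) auto
  ultimately show ?thesis
    using assms(1) by (simp add: partfun_eq_prod)
qed

lemma partfun_ratio_le:
  assumes "a > 0" "m \<le> h" "h \<le> N"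
  shows "partfun m a / partfun N a \<le> exp (- (real (h - m) * exp (- a * real h)))"
proof -
  have "partfun m a / partfun N a \<le> exp (- (\<Sum>k\<in>{m<..N}. exp (- a * real k)))"
    using assms(1,2,3) by (simp add: partfun_ratio_eq_prod prod_one_minus_le_exp_neg_sum)
  also have "\<dots> \<le> exp (- (\<Sum>k\<in>{m<..h}. exp (- a * real k)))"
    using assms(3) by (subst exp_le_cancel_iff, intro le_imp_neg_le sum_mono2) auto
  also have "\<dots> \<le> exp (- (\<Sum>k\<in>{m<..h}. exp (- a * real h)))"
    using assms(1) by (subst exp_le_cancel_iff, intro le_imp_neg_le sum_mono) auto
  finally show ?thesis by simp
qed

lemma condensate_event_iff:
  assumes "m \<le> N" "0 < N"
  shows "1 - real m / real N \<le> real k / real N \<longleftrightarrow> N - m \<le> k"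
proof -
  have "(1 - real m / real N) * real N = real N - real m"
    using assms(2) by (simp add: field_simps)
  then have "1 - real m / real N \<le> real k / real N \<longleftrightarrow> real N - real m \<le> real k"
    using assms(2) by (simp add: le_divide_eq)
  then show ?thesis using assms(1) by linarith
qed

lemma canon_prob_condensate_eq:
  assumes "a > 0" "m \<le> N" "0 < N"
  shows "canon_prob N a (\<lambda>n. real (n 0) / real N \<ge> 1 - real m / real N)
           = partfun m a / partfun N a"
proof -
  have "{n \<in> configs N. real (n 0) / real N \<ge> 1 - real m / real N}
      = {n \<in> configs (m + (N - m)). N - m \<le> n 0}"
    using assms(2,3) by (simp add: condensate_event_iff)
  then show ?thesis
    using has_sum_ground_occupation_ge[OF summable_configs[OF assms(1)], of m "N - m"]
    unfolding canon_prob_def by (simp add: infsumI)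
qed

lemma canon_prob_condensate_le:
  assumes "a > 0" "m \<le> N" "0 < N"
  shows "canon_prob N a (\<lambda>n. real (n 0) / real N \<ge> 1 - real m / real N)
           \<le> exp (- ((real N - real m - 1) / 2 * exp (- a * (real N + real m) / 2)))"
proof -
  define h where "h = (N + m) div 2"
  have h: "real N - real m - 1 \<le> 2 * real (h - m)" "real h \<le> (real N + real m) / 2"
    using assms(2) by (auto simp: h_def)
  have "exp (- a * (real N + real m) / 2) \<le> exp (- a * real h)"
    using h(2) assms(1) by simp
  then have "(real N - real m - 1) / 2 * exp (- a * (real N + real m) / 2)
      \<le> real (h - m) * exp (- a * real h)"
  proof (cases "real N - real m - 1 \<ge> 0")
    case True
    then show ?thesis using h(1) \<open>exp _ \<le> _\<close> by (intro mult_mono) auto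
  next
    case False
    then have "(real N - real m - 1) / 2 * exp (- a * (real N + real m) / 2) \<le> 0"
      by (simp add: mult_nonpos_nonneg)
    also have "0 \<le> real (h - m) * exp (- a * real h)" by simp
    finally show ?thesis .
  qed
  then have "exp (- (real (h - m) * exp (- a * real h)))
      \<le> exp (- ((real N - real m - 1) / 2 * exp (- a * (real N + real m) / 2)))"
    by simp
  moreover have "m \<le> h" "h \<le> N" using assms(2) by (auto simp: h_def)
  ultimately show ?thesis
    unfolding canon_prob_condensate_eq[OF assms]
    by (meson order_trans partfun_ratio_le[OF assms(1)])
qed

lemma canon_prob_nonneg: "canon_prob N a A \<ge> 0"
  unfolding canon_prob_def partfun_def
  by (intro divide_nonneg_nonneg infsum_nonneg) (simp_all add: boltz_pos less_imp_le)

lemma mean_n0_nonneg: "mean_n0 N a \<ge> 0"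
  unfolding mean_n0_def partfun_def
  by (intro divide_nonneg_nonneg infsum_nonneg) (simp_all add: boltz_pos less_imp_le)

lemma occupation_le_boltz:
  assumes "n \<in> configs N"
  shows "real (n j) * boltz a n \<le> real N * boltz a n"
  using configs_occupation_le[OF assms] by (intro mult_right_mono) (auto simp: boltz_pos less_imp_le)

lemma summable_n0_boltz:
  assumes "a > 0"
  shows "(\<lambda>n. real (n 0) * boltz a n) summable_on configs N"
  by (rule summable_on_comparison_test[OF summable_on_cmult_right[OF summable_configs[OF assms],
        of "real N"]])
    (use occupation_le_boltz in \<open>auto simp: boltz_pos less_imp_le\<close>)

text \<open>On the event \<open>n\<^sub>0 \<ge> N - m\<close> bound \<open>n\<^sub>0\<close> by \<open>N\<close>, off it by \<open>N - m\<close>.\<close>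
lemma mean_n0_le:
  assumes "a > 0" "m \<le> N" "0 < N"
  shows "mean_n0 N a / real N \<le> (1 - real m / real N) + partfun m a / partfun N a"
proof -
  define f where "f = (\<lambda>n. real (n 0) * boltz a n)"
  define E where "E = {n \<in> configs (m + (N - m)). N - m \<le> n 0}"
  define D where "D = configs N - E"
  have S: "boltz a summable_on configs N" by (rule summable_configs[OF assms(1)])
  have fS: "f summable_on configs N" unfolding f_def by (rule summable_n0_boltz[OF assms(1)])
  have E: "E \<subseteq> configs N" "D \<subseteq> configs N" using assms(2) by (auto simp: E_def D_def)
  have "infsum f (configs N) = infsum f E + infsum f D"
    using E by (subst infsum_Un_disjoint[symmetric])
      (auto intro: summable_on_subset_banach[OF fS] simp: D_def Un_absorb1)
  also have "infsum f E \<le> real N * partfun m a"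
  proof -
    have "infsum f E \<le> infsum (\<lambda>n. real N * boltz a n) E"
      using E by (intro infsum_mono summable_on_subset_banach[OF fS] summable_on_cmult_right
          summable_on_subset_banach[OF S]) (auto simp: f_def occupation_le_boltz)
    also have "\<dots> = real N * partfun m a"
      using has_sum_ground_occupation_ge[OF summable_configs[OF assms(1)], of m "N - m"] assms(2)
      by (simp add: infsum_cmult_right' E_def infsumI)
    finally show ?thesis .
  qed
  also have "infsum f D \<le> real (N - m) * partfun N a"
  proof -
    have "infsum f D \<le> infsum (\<lambda>n. real (N - m) * boltz a n) D"
      using E by (intro infsum_mono summable_on_subset_banach[OF fS] summable_on_cmult_right
          summable_on_subset_banach[OF S])
        (auto simp: D_def E_def f_def boltz_pos less_imp_le assms intro!: mult_right_mono)
    also have "\<dots> \<le> real (N - m) * partfun N a"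
      unfolding infsum_cmult_right' partfun_def using E
      by (intro mult_left_mono infsum_mono2 summable_on_subset_banach[OF S] S)
        (auto simp: boltz_pos less_imp_le)
    finally show ?thesis .
  qed
  finally have "mean_n0 N a \<le> real N * (partfun m a / partfun N a) + real (N - m)"
    using partfun_pos[OF assms(1), of N] unfolding mean_n0_def f_def[symmetric]
    by (simp add: field_simps)
  then show ?thesis using assms(2,3) by (simp add: field_simps)
qed

context
  fixes a :: "nat \<Rightarrow> real" and m :: "nat \<Rightarrow> nat" and lam :: real
  assumes a_pos: "\<And>N. a N > 0"
    and m_le: "\<And>N. m N \<le> N"
    and lim: "(\<lambda>N. 1 - real (m N) / real N) \<longlonglongrightarrow> lam" and lam_pos: "lam > 0"
    and L_at_top: "filterlim (\<lambda>N. ln (real N) - (1 - (1 - real (m N) / real N) / 2) * real N * a N)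
      at_top sequentially"
begin

lemma canon_prob_condensate_tendsto_0:
  "(\<lambda>N. canon_prob N (a N) (\<lambda>n. real (n 0) / real N \<ge> 1 - real (m N) / real N)) \<longlonglongrightarrow> 0"
proof -
  define b where
    "b N = (real N - real (m N) - 1) / 2 * exp (- a N * (real N + real (m N)) / 2)" for N
  have b_eq: "b N = ((1 - real (m N) / real N) - 1 / real N) / 2
      * exp (ln (real N) - (1 - (1 - real (m N) / real N) / 2) * real N * a N)" if "N > 0" for N
  proof -
    have "ln (real N) - (1 - (1 - real (m N) / real N) / 2) * real N * a N
        = ln (real N) + (- a N * (real N + real (m N)) / 2)"
      using that by (simp add: field_simps)
    then have exp_eq: "exp (ln (real N) - (1 - (1 - real (m N) / real N) / 2) * real N * a N)
        = real N * exp (- a N * (real N + real (m N)) / 2)"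
      using that by (simp only: exp_add exp_ln of_nat_0_less_iff)
    have "((1 - real (m N) / real N) - 1 / real N) / 2 * real N = (real N - real (m N) - 1) / 2"
      using that by (simp add: field_simps)
    then show ?thesis unfolding b_def exp_eq by (metis mult.assoc)
  qed
  have "(\<lambda>N. ((1 - real (m N) / real N) - 1 / real N) / 2) \<longlonglongrightarrow> (lam - 0) / 2"
    by (intro tendsto_divide tendsto_diff lim lim_1_over_n tendsto_const) simp
  then have "filterlim (\<lambda>N. ((1 - real (m N) / real N) - 1 / real N) / 2
      * exp (ln (real N) - (1 - (1 - real (m N) / real N) / 2) * real N * a N)) at_top sequentially"
    by (rule filterlim_tendsto_pos_mult_at_top)
      (use lam_pos filterlim_compose[OF exp_at_top L_at_top] in auto)
  then have "filterlim b at_top sequentially"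
    by (rule filterlim_cong[THEN iffD1, rotated 3])
      (auto intro: eventually_mono[OF eventually_gt_at_top[of 0]] simp: b_eq)
  then have exp_lim: "(\<lambda>N. exp (- b N)) \<longlonglongrightarrow> 0"
    using filterlim_compose[OF exp_at_bot] filterlim_uminus_at_top by blast
  have upper: "\<forall>\<^sub>F N in sequentially.
      canon_prob N (a N) (\<lambda>n. real (n 0) / real N \<ge> 1 - real (m N) / real N) \<le> exp (- b N)"
    using eventually_gt_at_top[of 0]
    by eventually_elim (unfold b_def, rule canon_prob_condensate_le[OF a_pos m_le])
  show ?thesis
    by (rule tendsto_sandwich[OF _ upper tendsto_const exp_lim]) (simp add: canon_prob_nonneg)
qed

lemma limsup_mean_n0_le: "limsup (\<lambda>N. ereal (mean_n0 N (a N) / real N)) \<le> ereal lam"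
proof -
  define P where
    "P N = canon_prob N (a N) (\<lambda>n. real (n 0) / real N \<ge> 1 - real (m N) / real N)" for N
  have "\<forall>\<^sub>F N in sequentially.
      ereal (mean_n0 N (a N) / real N) \<le> ereal ((1 - real (m N) / real N) + P N)"
    using eventually_gt_at_top[of 0]
  proof eventually_elim
    case (elim N)
    show ?case
      unfolding ereal_less_eq(3) P_def canon_prob_condensate_eq[OF a_pos m_le elim]
      by (rule mean_n0_le[OF a_pos m_le elim])
  qed
  then have "limsup (\<lambda>N. ereal (mean_n0 N (a N) / real N))
      \<le> limsup (\<lambda>N. ereal ((1 - real (m N) / real N) + P N))"
    by (rule Limsup_mono)
  also have "\<dots> = ereal (lam + 0)"
    using tendsto_add[OF lim canon_prob_condensate_tendsto_0]
    by (intro lim_imp_Limsup) (simp_all add: P_def)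
  finally show ?thesis by simp
qed

end

lemma floor_fraction_le:
  assumes "0 \<le> \<epsilon>"
  shows "nat \<lfloor>(1 - \<epsilon>) * real N\<rfloor> \<le> N"
proof -
  have "(1 - \<epsilon>) * real N \<le> real N" using assms by (simp add: algebra_simps)
  from floor_mono[OF this] show ?thesis by simp
qed

lemma one_minus_floor_fraction_tendsto:
  assumes "0 \<le> \<epsilon>" "\<epsilon> \<le> 1"
  shows "(\<lambda>N. 1 - real (nat \<lfloor>(1 - \<epsilon>) * real N\<rfloor>) / real N) \<longlonglongrightarrow> \<epsilon>"
proof (rule tendsto_sandwich[OF _ _ tendsto_const])
  have floor: "(1 - \<epsilon>) * real N - 1 < real (nat \<lfloor>(1 - \<epsilon>) * real N\<rfloor>)"
    "real (nat \<lfloor>(1 - \<epsilon>) * real N\<rfloor>) \<le> (1 - \<epsilon>) * real N" for N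
  proof -
    have "real (nat \<lfloor>(1 - \<epsilon>) * real N\<rfloor>) = of_int \<lfloor>(1 - \<epsilon>) * real N\<rfloor>"
      using assms by simp
    then show "(1 - \<epsilon>) * real N - 1 < real (nat \<lfloor>(1 - \<epsilon>) * real N\<rfloor>)"
      "real (nat \<lfloor>(1 - \<epsilon>) * real N\<rfloor>) \<le> (1 - \<epsilon>) * real N"
      by linarith+
  qed
  have lower: "\<epsilon> \<le> 1 - real (nat \<lfloor>(1 - \<epsilon>) * real N\<rfloor>) / real N" if "0 < N" for N
  proof -
    have "real (nat \<lfloor>(1 - \<epsilon>) * real N\<rfloor>) / real N \<le> 1 - \<epsilon>"
      using floor(2)[of N] that by (simp add: divide_le_eq mult.commute)
    then show ?thesis by simp
  qed
  have upper: "1 - real (nat \<lfloor>(1 - \<epsilon>) * real N\<rfloor>) / real N \<le> \<epsilon> + 1 / real N"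
    if "0 < N" for N
  proof -
    have "((1 - \<epsilon>) * real N - 1) / real N \<le> real (nat \<lfloor>(1 - \<epsilon>) * real N\<rfloor>) / real N"
      using floor(1)[of N] that by (intro divide_right_mono) auto
    moreover have "((1 - \<epsilon>) * real N - 1) / real N = (1 - \<epsilon>) - 1 / real N"
      using that by (simp add: field_simps)
    ultimately show ?thesis by simp
  qed
  show "\<forall>\<^sub>F N in sequentially. \<epsilon> \<le> 1 - real (nat \<lfloor>(1 - \<epsilon>) * real N\<rfloor>) / real N"
    using eventually_gt_at_top[of 0] by eventually_elim (rule lower)
  show "\<forall>\<^sub>F N in sequentially. 1 - real (nat \<lfloor>(1 - \<epsilon>) * real N\<rfloor>) / real N \<le> \<epsilon> + 1 / real N"
    using eventually_gt_at_top[of 0] by eventually_elim (rule upper)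
  show "(\<lambda>N. \<epsilon> + 1 / real N) \<longlonglongrightarrow> \<epsilon>"
    using tendsto_add[OF tendsto_const lim_1_over_n, of \<epsilon>] by simp
qed

lemma mean_n0_tendsto_0:
  fixes a :: "nat \<Rightarrow> real"
  assumes a_pos: "\<And>N. a N > 0"
    and L_at_top: "filterlim (\<lambda>N. ln (real N) - real N * a N) at_top sequentially"
  shows "(\<lambda>N. mean_n0 N (a N) / real N) \<longlonglongrightarrow> 0"
proof -
  have limsup_le: "limsup (\<lambda>N. ereal (mean_n0 N (a N) / real N)) \<le> ereal \<epsilon>"
    if "0 < \<epsilon>" "\<epsilon> \<le> 1" for \<epsilon>
  proof -
    define m where "m N = nat \<lfloor>(1 - \<epsilon>) * real N\<rfloor>" for N
    have m_le: "m N \<le> N" for N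
      unfolding m_def using that by (intro floor_fraction_le) simp
    have "ln (real N) - real N * a N
        \<le> ln (real N) - (1 - (1 - real (m N) / real N) / 2) * real N * a N" for N
    proof -
      have "0 \<le> 1 - real (m N) / real N" using m_le[of N] by (auto simp: divide_le_eq_1)
      then have "(1 - (1 - real (m N) / real N) / 2) * (real N * a N) \<le> 1 * (real N * a N)"
        using a_pos[of N] by (intro mult_right_mono) auto
      then show ?thesis by (simp add: mult.assoc)
    qed
    then have L_m: "filterlim (\<lambda>N. ln (real N) - (1 - (1 - real (m N) / real N) / 2) * real N * a N)
        at_top sequentially"
      by (intro filterlim_at_top_mono[OF L_at_top] always_eventually) auto
    have "(\<lambda>N. 1 - real (m N) / real N) \<longlonglongrightarrow> \<epsilon>"
      unfolding m_def using that by (intro one_minus_floor_fraction_tendsto) auto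
    from limsup_mean_n0_le[OF a_pos m_le this that(1) L_m] show ?thesis .
  qed
  have "limsup (\<lambda>N. ereal (mean_n0 N (a N) / real N)) \<le> ereal 0"
  proof (rule ereal_le_epsilon2)
    fix e :: real assume "0 < e"
    then have "limsup (\<lambda>N. ereal (mean_n0 N (a N) / real N)) \<le> ereal (min e 1)"
      by (intro limsup_le) auto
    also have "\<dots> \<le> ereal 0 + ereal e" by simp
    finally show "limsup (\<lambda>N. ereal (mean_n0 N (a N) / real N)) \<le> ereal 0 + ereal e" .
  qed
  moreover have "ereal 0 \<le> liminf (\<lambda>N. ereal (mean_n0 N (a N) / real N))"
    by (intro Liminf_bounded always_eventually) (simp add: mean_n0_nonneg)
  ultimately show ?thesis
    by (intro limsup_le_liminf_real) auto
qed

theorem proposition2: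
  fixes a :: "nat \<Rightarrow> real"
  assumes apos: "\<And>N. a N > 0"
  shows "(\<forall>(m :: nat \<Rightarrow> nat) (lam :: real).
            (\<forall>N. m N \<le> N) \<and>
            ((\<lambda>N. 1 - real (m N) / real N) \<longlonglongrightarrow> lam) \<and> lam > 0 \<and>
            filterlim (\<lambda>N. ln (real N) - (1 - (1 - real (m N) / real N) / 2) * real N * a N)
              at_top sequentially
          \<longrightarrow>
            ((\<lambda>N. canon_prob N (a N)
                 (\<lambda>n. real (n 0) / real N \<ge> 1 - real (m N) / real N)) \<longlonglongrightarrow> 0) \<and>
            limsup (\<lambda>N. ereal (mean_n0 N (a N) / real N)) \<le> ereal lam)
       \<and>
         (filterlim (\<lambda>N. ln (real N) - real N * a N) at_top sequentially
          \<longrightarrow> ((\<lambda>N. mean_n0 N (a N) / real N) \<longlonglongrightarrow> 0))"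
proof (intro conjI allI impI; (elim conjE)?)
  fix m :: "nat \<Rightarrow> nat" and lam :: real
  assume "\<forall>N. m N \<le> N" and lim: "(\<lambda>N. 1 - real (m N) / real N) \<longlonglongrightarrow> lam" and "lam > 0"
    and L_at_top: "filterlim (\<lambda>N. ln (real N) - (1 - (1 - real (m N) / real N) / 2) * real N * a N)
      at_top sequentially"
  then have "\<And>N. m N \<le> N" by blast
  from canon_prob_condensate_tendsto_0[OF apos this lim \<open>lam > 0\<close> L_at_top]
  show "(\<lambda>N. canon_prob N (a N) (\<lambda>n. real (n 0) / real N \<ge> 1 - real (m N) / real N))
      \<longlonglongrightarrow> 0" .
  from limsup_mean_n0_le[OF apos \<open>\<And>N. m N \<le> N\<close> lim \<open>lam > 0\<close> L_at_top]
  show "limsup (\<lambda>N. ereal (mean_n0 N (a N) / real N)) \<le> ereal lam" .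
next
  assume "filterlim (\<lambda>N. ln (real N) - real N * a N) at_top sequentially"
  from mean_n0_tendsto_0[OF apos this] show "(\<lambda>N. mean_n0 N (a N) / real N) \<longlonglongrightarrow> 0" .
qed

end
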